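(* (i) For every $n\ge 1$, the chain triangular cactus $T_n$ of length $n$ satisfies $s(T_n)=\lfloor (n-2)/2\rfloor+2$. (ii) For every $n\ge 1$, a chain square cactus $O_n$ of length $n$ satisfies $s(O_n)=n+1$.
   Context: The saturation number $s(G)$ is the minimum cardinality of a maximal matching (a set of pairwise vertex-disjoint edges not properly contained in another such set) of $G$. A cactus is a connected graph in which no edge lies in more than one cycle. A triangular cactus is a cactus all of whose blocks are triangles; a chain triangular cactus of length $n$ is a triangular cactus with $n$ triangles in which each triangle has at most two cut-vertices and each cut-vertex is shared by exactly two triangles (equivalently, triangles $B_1,\dots,B_n$ where $B_i$ and $B_{i+1}$ share exactly one vertex and no other pairs share vertices); it has $2n+1$ vertices and $3n$ edges. A chain square cactus $O_n$ of length $n$ is defined in the same way with every triangle replaced by a $4$-cycle $C_4$ (consecutive $4$-cycles sharing exactly one vertex, each cut-vertex shared by exactly two blocks). *)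

theory Defs
  imports Complex_Main
begin

text \<open>Simple graphs: a vertex set V and a set E of 2-element vertex sets (edges).\<close>

definition matching :: "'a set set \<Rightarrow> 'a set set \<Rightarrow> bool" where
  "matching E M \<longleftrightarrow> M \<subseteq> E \<and> (\<forall>e\<in>M. \<forall>f\<in>M. e \<noteq> f \<longrightarrow> e \<inter> f = {})"

definition maximal_matching :: "'a set set \<Rightarrow> 'a set set \<Rightarrow> bool" where
  "maximal_matching E M \<longleftrightarrow> matching E M \<and> \<not> (\<exists>M'. matching E M' \<and> M \<subset> M')"

definition sat_num :: "'a set set \<Rightarrow> nat" where
  "sat_num E = Min (card ` {M. maximal_matching E M})"

definition chain_tri_cactus :: "'a set \<Rightarrow> 'a set set \<Rightarrow> nat \<Rightarrow> bool" where
  "chain_tri_cactus V E n \<longleftrightarrow> (\<exists>B :: nat \<Rightarrow> 'a set.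
     (\<forall>i<n. card (B i) = 3) \<and>
     V = (\<Union>i<n. B i) \<and>
     E = (\<Union>i<n. {{x, y} | x y. x \<in> B i \<and> y \<in> B i \<and> x \<noteq> y}) \<and>
     (\<forall>i. i + 1 < n \<longrightarrow> card (B i \<inter> B (i + 1)) = 1) \<and>
     (\<forall>i j. i < n \<and> j < n \<and> i + 1 < j \<longrightarrow> B i \<inter> B j = {}))"

text \<open>Chain square cactus of length n: the same with every triangle replaced by a 4-cycle
  (the positions of the cut vertices on each 4-cycle are arbitrary).\<close>
definition chain_sq_cactus :: "'a set \<Rightarrow> 'a set set \<Rightarrow> nat \<Rightarrow> bool" where
  "chain_sq_cactus V E n \<longleftrightarrow> (\<exists>(B :: nat \<Rightarrow> 'a set) (C :: nat \<Rightarrow> 'a set set).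
     (\<forall>i<n. \<exists>a b c d. distinct [a, b, c, d] \<and> B i = {a, b, c, d} \<and>
                       C i = {{a, b}, {b, c}, {c, d}, {d, a}}) \<and>
     V = (\<Union>i<n. B i) \<and>
     E = (\<Union>i<n. C i) \<and>
     (\<forall>i. i + 1 < n \<longrightarrow> card (B i \<inter> B (i + 1)) = 1) \<and>
     (\<forall>i j. i < n \<and> j < n \<and> i + 1 < j \<longrightarrow> B i \<inter> B j = {}))"

end

theory Submission
  imports Defs
begin

text \<open>For a maximal matching \<open>M\<close>, the vertices saturated by \<open>M\<close> meet every edge. In block \<open>i\<close>
  they are the endpoints of the edges of \<open>M\<close> inside the block, plus the vertices saturated by
  edges of other blocks, which are cut vertices. A cut vertex is saturated from outside for at most
  one of its two blocks, so these contributions add up to at most \<open>n - 1\<close>. A triangle needs two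
  saturated vertices, and in a 4-cycle an inner matching edge together with the outside-saturated
  vertices must weigh at least two, since one edge leaves the opposite edge uncovered. Summing gives
  \<open>2n \<le> 2|M| + n - 1\<close> for triangles and \<open>2n \<le> |M| + n - 1\<close> for squares; matchings
  attaining these bounds are built block by block.\<close>

lemma maximal_matching_iff_covers:
  assumes "{} \<notin> E"
  shows "maximal_matching E M \<longleftrightarrow> matching E M \<and> (\<forall>e\<in>E. e \<inter> \<Union>M \<noteq> {})"
proof
  assume max: "maximal_matching E M"
  then have m: "matching E M" by (simp add: maximal_matching_def)
  have "e \<inter> \<Union>M \<noteq> {}" if e: "e \<in> E" for e
  proof
    assume free: "e \<inter> \<Union>M = {}"
    have "e \<noteq> {}" using e assms by blast
    with free have "e \<notin> M" by auto
    then have "M \<subset> insert e M" by blast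
    moreover have "matching E (insert e M)"
      using m e free unfolding matching_def by (auto simp: Int_commute)
    ultimately show False using max unfolding maximal_matching_def by blast
  qed
  with m show "matching E M \<and> (\<forall>e\<in>E. e \<inter> \<Union>M \<noteq> {})" by blast
next
  assume cov: "matching E M \<and> (\<forall>e\<in>E. e \<inter> \<Union>M \<noteq> {})"
  have False if m': "matching E M'" and "M \<subset> M'" for M'
  proof -
    obtain e where e: "e \<in> M'" "e \<notin> M" using \<open>M \<subset> M'\<close> by blast
    then have "e \<in> E" using m' unfolding matching_def by blast
    moreover have "e \<inter> f = {}" if "f \<in> M" for f
    proof -
      from that \<open>M \<subset> M'\<close> e have "f \<in> M'" "f \<noteq> e" by auto
      with m' e show ?thesis unfolding matching_def by blast
    qed
    then have "e \<inter> \<Union>M = {}" by blast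
    ultimately show False using cov by blast
  qed
  with cov show "maximal_matching E M" unfolding maximal_matching_def by blast
qed

lemma sat_num_eqI:
  assumes "finite E" and "\<And>M. maximal_matching E M \<Longrightarrow> k \<le> card M"
    and "maximal_matching E M" and "card M = k"
  shows "sat_num E = k"
proof -
  have "{M. maximal_matching E M} \<subseteq> Pow E"
    unfolding maximal_matching_def matching_def by blast
  with assms(1) have "finite (card ` {M. maximal_matching E M})"
    by (meson finite_Pow_iff finite_subset finite_imageI)
  moreover have "k \<in> card ` {M. maximal_matching E M}" using assms(3,4) by blast
  ultimately show ?thesis
    unfolding sat_num_def using assms(2) by (intro Min_eqI) auto
qed

lemma card_Union_matching:
  assumes "matching E M" and "\<forall>e\<in>M. card e = 2"
  shows "card (\<Union>M) = 2 * card M"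
proof -
  have "pairwise disjnt M"
    using assms(1) unfolding matching_def pairwise_def disjnt_def by blast
  moreover have "finite e" if "e \<in> M" for e
    using assms(2) that by (metis card.infinite zero_neq_numeral)
  ultimately have "card (\<Union>M) = sum card M" by (rule card_Union_disjoint)
  also have "\<dots> = 2 * card M" using assms(2) by simp
  finally show ?thesis .
qed

lemma subsets_meet_if_card_gt:
  assumes "finite A" "X \<subseteq> A" "Y \<subseteq> A" "card A < card X + card Y"
  shows "X \<inter> Y \<noteq> {}"
proof
  assume "X \<inter> Y = {}"
  with assms have "card (X \<union> Y) = card X + card Y"
    by (intro card_Un_disjoint) (auto intro: finite_subset)
  moreover have "card (X \<union> Y) \<le> card A" using assms by (intro card_mono) auto
  ultimately show False using assms(4) by simp
qed

definition complete_edges :: "'a set \<Rightarrow> 'a set set" where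
  "complete_edges A = {{x, y} | x y. x \<in> A \<and> y \<in> A \<and> x \<noteq> y}"

lemma complete_edges_iff: "e \<in> complete_edges A \<longleftrightarrow> e \<subseteq> A \<and> card e = 2"
  unfolding complete_edges_def by (auto simp: card_2_iff)

lemma triangle_cover_iff:
  assumes "card A = 3"
  shows "2 \<le> card (A \<inter> T) \<longleftrightarrow> (\<forall>e\<in>complete_edges A. e \<inter> T \<noteq> {})"
proof -
  have fin: "finite A" using assms by (metis card.infinite zero_neq_numeral)
  show ?thesis
  proof
    assume two: "2 \<le> card (A \<inter> T)"
    show "\<forall>e\<in>complete_edges A. e \<inter> T \<noteq> {}"
    proof
      fix e assume "e \<in> complete_edges A"
      then have "e \<inter> (A \<inter> T) \<noteq> {}"
        using assms two fin by (intro subsets_meet_if_card_gt) (auto simp: complete_edges_iff)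
      then show "e \<inter> T \<noteq> {}" by blast
    qed
  next
    assume cov: "\<forall>e\<in>complete_edges A. e \<inter> T \<noteq> {}"
    show "2 \<le> card (A \<inter> T)"
    proof (rule ccontr)
      assume "\<not> 2 \<le> card (A \<inter> T)"
      with assms fin have "2 \<le> card (A - T)" using card_Diff_subset_Int[of A T] by simp
      then obtain e where "e \<subseteq> A - T" "card e = 2" by (meson obtain_subset_with_card_n)
      then have "e \<in> complete_edges A" "e \<inter> T = {}" by (auto simp: complete_edges_iff)
      with cov show False by blast
    qed
  qed
qed

locale block_chain =
  fixes n :: nat and B :: "nat \<Rightarrow> 'a set"
  assumes card_shared: "Suc i < n \<Longrightarrow> card (B i \<inter> B (Suc i)) = 1"
    and far_blocks_disjoint: "j < n \<Longrightarrow> Suc i < j \<Longrightarrow> B i \<inter> B j = {}"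
begin

lemma blocks_meet:
  assumes "i < n" "j < n" "B i \<inter> B j \<noteq> {}"
  shows "i = j \<or> Suc i = j \<or> Suc j = i"
proof (rule ccontr)
  assume "\<not> ?thesis"
  then have "Suc i < j \<or> Suc j < i" by arith
  then show False using far_blocks_disjoint assms by (auto simp: Int_commute)
qed

lemma vertex_in_at_most_two_blocks:
  assumes "v \<in> B i" "v \<in> B j" "v \<in> B k" "i < n" "j < n" "k < n"
  shows "i = j \<or> j = k \<or> i = k"
proof -
  have "i = j \<or> Suc i = j \<or> Suc j = i" "j = k \<or> Suc j = k \<or> Suc k = j"
    "i = k \<or> Suc i = k \<or> Suc k = i"
    using blocks_meet assms by blast+
  then show ?thesis by arith
qed

lemma card_block_inter_le:
  assumes "i < n" "j < n" "i \<noteq> j"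
  shows "card (B i \<inter> B j) \<le> 1"
proof (cases "B i \<inter> B j = {}")
  case False
  with assms have "Suc i = j \<or> Suc j = i" using blocks_meet by blast
  then show ?thesis using assms card_shared by (auto simp: Int_commute)
qed simp

definition joint :: "nat \<Rightarrow> 'a set" where
  "joint i = (if 0 < i \<and> i < n then B (i - 1) \<inter> B i else {})"

lemma joint_subset: "joint i \<subseteq> B i"
  unfolding joint_def by auto

lemma joint_Suc_subset: "joint (Suc i) \<subseteq> B i"
  unfolding joint_def by auto

lemma finite_joint: "finite (joint i)"
  unfolding joint_def using card_shared[of "i - 1"] by (auto intro: card_ge_0_finite)

lemma joint_subset_UN: "joint k \<subseteq> (\<Union>i\<in>{1..<n}. joint i)"
proof (cases "k \<in> {1..<n}")
  case False
  then show ?thesis by (auto simp: joint_def)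
qed blast

lemma card_joint: "0 < i \<Longrightarrow> i < n \<Longrightarrow> card (joint i) = 1"
  unfolding joint_def using card_shared[of "i - 1"] by simp

lemma card_joint_le: "card (joint i) \<le> 1"
  using card_joint[of i] by (cases "0 < i \<and> i < n") (auto simp: joint_def)

lemma joints_disjoint: "joint i \<inter> joint (Suc i) = {}"
  unfolding joint_def using far_blocks_disjoint[of "Suc i" "i - 1"] by auto

lemma disjoint_across_joint:
  assumes "g \<subseteq> B i" "h \<subseteq> B (Suc i)" "h \<inter> joint (Suc i) = {}" "Suc i < n"
  shows "g \<inter> h = {}"
  using assms unfolding joint_def by auto

end

locale edged_block_chain = block_chain +
  fixes C :: "nat \<Rightarrow> 'a set set"
  assumes finite_block: "i < n \<Longrightarrow> finite (B i)"
    and edge_subset_block: "i < n \<Longrightarrow> e \<in> C i \<Longrightarrow> e \<subseteq> B i"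
    and card_edge: "i < n \<Longrightarrow> e \<in> C i \<Longrightarrow> card e = 2"
begin

abbreviation edges :: "'a set set" where
  "edges \<equiv> \<Union>i<n. C i"

lemma empty_notin_edges: "{} \<notin> edges"
  using card_edge by fastforce

lemma finite_edge_set: "i < n \<Longrightarrow> finite (C i)"
  using finite_block edge_subset_block by (meson PowI finite_Pow_iff finite_subset subsetI)

lemma finite_edges: "finite edges"
  using finite_edge_set by blast

lemma edge_sets_disjoint:
  assumes "i < n" "j < n" "i \<noteq> j"
  shows "C i \<inter> C j = {}"
proof (rule ccontr)
  assume "C i \<inter> C j \<noteq> {}"
  then obtain e where "e \<in> C i" "e \<in> C j" by blast
  with assms have "e \<subseteq> B i \<inter> B j" "card e = 2"
    using edge_subset_block card_edge by auto
  then have "2 \<le> card (B i \<inter> B j)"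
    using assms finite_block by (metis card_mono finite_Int)
  with card_block_inter_le[OF assms] show False by simp
qed

lemma card_UN_edge_subsets:
  assumes "\<And>i. i < n \<Longrightarrow> F i \<subseteq> C i"
  shows "card (\<Union>i<n. F i) = (\<Sum>i<n. card (F i))"
proof (rule card_UN_disjoint)
  show "\<forall>i\<in>{..<n}. finite (F i)" using assms finite_edge_set finite_subset by blast
  show "\<forall>i\<in>{..<n}. \<forall>j\<in>{..<n}. i \<noteq> j \<longrightarrow> F i \<inter> F j = {}"
    using assms edge_sets_disjoint by blast
qed simp

lemma card_eq_sum_card_Int:
  assumes "M \<subseteq> edges"
  shows "card M = (\<Sum>i<n. card (M \<inter> C i))"
proof -
  from assms have "M = (\<Union>i<n. M \<inter> C i)" by blast
  then show ?thesis by (metis card_UN_edge_subsets inf_le2)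
qed

definition saturated_outside :: "'a set set \<Rightarrow> nat \<Rightarrow> 'a set" where
  "saturated_outside M i = {v \<in> B i. \<exists>e\<in>M. v \<in> e \<and> e \<notin> C i}"

lemma saturated_outside_subset_joints:
  assumes "M \<subseteq> edges" "i < n"
  shows "saturated_outside M i \<subseteq> joint i \<union> joint (Suc i)"
proof
  fix v assume "v \<in> saturated_outside M i"
  then obtain e k where v: "v \<in> B i" "v \<in> e" "e \<in> C k" "k < n" "k \<noteq> i"
    using assms(1) unfolding saturated_outside_def by blast
  then have "v \<in> B k" using edge_subset_block by blast
  with v assms(2) have "Suc i = k \<or> Suc k = i" using blocks_meet by blast
  with v \<open>v \<in> B k\<close> assms(2) show "v \<in> joint i \<union> joint (Suc i)"
    unfolding joint_def by auto
qed

lemma saturated_outside_disjoint: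
  assumes "matching edges M" "i < n" "j < n" "i \<noteq> j"
  shows "saturated_outside M i \<inter> saturated_outside M j = {}"
proof (rule ccontr)
  assume "saturated_outside M i \<inter> saturated_outside M j \<noteq> {}"
  then obtain v e e' where v: "v \<in> B i" "v \<in> B j" "e \<in> M" "v \<in> e" "e \<notin> C i"
      "e' \<in> M" "v \<in> e'" "e' \<notin> C j"
    unfolding saturated_outside_def by blast
  then have "e' = e" using assms(1) unfolding matching_def by blast
  obtain k where k: "k < n" "e \<in> C k" using v assms(1) unfolding matching_def by blast
  with v \<open>e' = e\<close> have "v \<in> B k" "k \<noteq> i" "k \<noteq> j" using edge_subset_block by auto
  with vertex_in_at_most_two_blocks[OF v(1,2) \<open>v \<in> B k\<close> assms(2,3) k(1)] assms(4)
  show False by blast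
qed

lemma sum_card_saturated_outside_le:
  assumes "matching edges M"
  shows "(\<Sum>i<n. card (saturated_outside M i)) \<le> n - 1"
proof -
  have sub: "M \<subseteq> edges" using assms unfolding matching_def by blast
  have "(\<Sum>i<n. card (saturated_outside M i)) = card (\<Union>i<n. saturated_outside M i)"
    using assms saturated_outside_disjoint finite_block
    by (intro card_UN_disjoint[symmetric]) (auto simp: saturated_outside_def)
  also have "\<dots> \<le> card (\<Union>i\<in>{1..<n}. joint i)"
  proof (rule card_mono)
    show "finite (\<Union>i\<in>{1..<n}. joint i)" using finite_joint by blast
    show "(\<Union>i<n. saturated_outside M i) \<subseteq> (\<Union>i\<in>{1..<n}. joint i)"
    proof
      fix v assume "v \<in> (\<Union>i<n. saturated_outside M i)"
      then obtain i where "i < n" "v \<in> saturated_outside M i" by blast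
      then have "v \<in> joint i \<union> joint (Suc i)" using saturated_outside_subset_joints[OF sub] by blast
      then show "v \<in> (\<Union>i\<in>{1..<n}. joint i)" using joint_subset_UN by blast
    qed
  qed
  also have "\<dots> \<le> (\<Sum>i\<in>{1..<n}. card (joint i))" by (rule card_UN_le) simp
  also have "\<dots> = n - 1" using card_joint by simp
  finally show ?thesis .
qed

lemma maximal_matching_meets_block_edge:
  assumes "maximal_matching edges M" "i < n" "e \<in> C i"
  shows "e \<inter> (saturated_outside M i \<union> \<Union>(M \<inter> C i)) \<noteq> {}"
proof -
  have "e \<inter> \<Union>M \<noteq> {}"
    using assms maximal_matching_iff_covers[OF empty_notin_edges] by blast
  then obtain v f where "v \<in> e" "v \<in> f" "f \<in> M" by blast
  moreover have "v \<in> B i" using assms(2,3) \<open>v \<in> e\<close> edge_subset_block by blast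
  ultimately show ?thesis unfolding saturated_outside_def by blast
qed

lemma card_maximal_matching_lower:
  assumes "maximal_matching edges M"
    and "\<And>i. i < n \<Longrightarrow> 2 \<le> w * card (M \<inter> C i) + card (saturated_outside M i)"
  shows "2 * n \<le> w * card M + (n - 1)"
proof -
  have m: "matching edges M" using assms(1) unfolding maximal_matching_def by blast
  then have sub: "M \<subseteq> edges" unfolding matching_def by blast
  have "2 * n = (\<Sum>i<n. 2::nat)" by simp
  also have "\<dots> \<le> (\<Sum>i<n. w * card (M \<inter> C i) + card (saturated_outside M i))"
    using assms(2) by (intro sum_mono) simp
  also have "\<dots> = w * card M + (\<Sum>i<n. card (saturated_outside M i))"
    by (simp add: sum.distrib sum_distrib_left card_eq_sum_card_Int[OF sub])
  also have "\<dots> \<le> w * card M + (n - 1)"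
    using sum_card_saturated_outside_le[OF m] by simp
  finally show ?thesis .
qed

lemma maximal_matching_UN:
  assumes sub: "\<And>i. i < n \<Longrightarrow> F i \<subseteq> C i"
    and within: "\<And>i f g. i < n \<Longrightarrow> f \<in> F i \<Longrightarrow> g \<in> F i \<Longrightarrow> f \<noteq> g \<Longrightarrow> f \<inter> g = {}"
    and across: "\<And>i f g. Suc i < n \<Longrightarrow> f \<in> F i \<Longrightarrow> g \<in> F (Suc i) \<Longrightarrow> f \<inter> g = {}"
    and covers: "\<And>i e. i < n \<Longrightarrow> e \<in> C i \<Longrightarrow> e \<inter> \<Union>(\<Union>j<n. F j) \<noteq> {}"
  shows "maximal_matching edges (\<Union>i<n. F i)"
proof -
  have disj: "f \<inter> g = {}" if f: "i < n" "f \<in> F i" and g: "j < n" "g \<in> F j" and "f \<noteq> g" for i j f g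
  proof -
    have "f \<subseteq> B i" "g \<subseteq> B j" using f g sub edge_subset_block by blast+
    consider "i = j" | "Suc i = j" | "Suc j = i" | "Suc i < j" | "Suc j < i" by arith
    then show ?thesis
    proof cases
      case 1
      with within f g \<open>f \<noteq> g\<close> show ?thesis by auto
    next
      case 2
      with across f g show ?thesis by auto
    next
      case 3
      with across[of j g f] f g show ?thesis by auto
    next
      case 4
      with far_blocks_disjoint[of j i] g \<open>f \<subseteq> B i\<close> \<open>g \<subseteq> B j\<close> show ?thesis by auto
    next
      case 5
      with far_blocks_disjoint[of i j] f \<open>f \<subseteq> B i\<close> \<open>g \<subseteq> B j\<close> show ?thesis by auto
    qed
  qed
  have "matching edges (\<Union>i<n. F i)" unfolding matching_def
  proof (intro conjI ballI impI)
    show "(\<Union>i<n. F i) \<subseteq> edges" using sub by blast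
    fix f g assume "f \<in> (\<Union>i<n. F i)" "g \<in> (\<Union>i<n. F i)" "f \<noteq> g"
    then show "f \<inter> g = {}" using disj by blast
  qed
  with covers show ?thesis by (auto simp: maximal_matching_iff_covers[OF empty_notin_edges])
qed

end

lemma sum_even_indicator: "(\<Sum>i<m. if even i then 1 else 0 :: nat) = (m + 1) div 2"
  by (induction m) auto

lemma sum_even_or_last_indicator:
  assumes "1 \<le> n"
  shows "(\<Sum>i<n. if even i \<or> Suc i = n then 1 else 0 :: nat) = (n + 2) div 2"
proof -
  obtain m where n: "n = Suc m" using assms by (cases n) auto
  have "(\<Sum>i<m. if even i \<or> Suc i = n then 1 else 0 :: nat) = (\<Sum>i<m. if even i then 1 else 0)"
    using n by (intro sum.cong) auto
  then show ?thesis using n sum_even_indicator[of m] by simp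
qed

locale triangle_chain = block_chain +
  assumes card_block: "i < n \<Longrightarrow> card (B i) = 3"
begin

sublocale edged_block_chain n B "\<lambda>i. complete_edges (B i)"
proof
  show "finite (B i)" if "i < n" for i
    using card_block[OF that] by (metis card.infinite zero_neq_numeral)
qed (simp_all add: complete_edges_iff)

lemma card_maximal_matching_ge:
  assumes "1 \<le> n" "maximal_matching edges M"
  shows "(n + 2) div 2 \<le> card M"
proof -
  have m: "matching edges M" using assms(2) unfolding maximal_matching_def by blast
  have "2 * n \<le> 2 * card M + (n - 1)"
  proof (rule card_maximal_matching_lower[OF assms(2)])
    fix i assume i: "i < n"
    let ?K = "M \<inter> complete_edges (B i)"
    define T where "T = saturated_outside M i \<union> \<Union>?K"
    have "T \<subseteq> B i" unfolding T_def saturated_outside_def by (auto simp: complete_edges_iff)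
    have "\<forall>e\<in>complete_edges (B i). e \<inter> T \<noteq> {}"
      using maximal_matching_meets_block_edge[OF assms(2) i] unfolding T_def by blast
    then have "2 \<le> card (B i \<inter> T)" using triangle_cover_iff[OF card_block[OF i]] by blast
    also have "B i \<inter> T = T" using \<open>T \<subseteq> B i\<close> by blast
    also have "card T \<le> card (saturated_outside M i) + card (\<Union>?K)"
      unfolding T_def by (rule card_Un_le)
    also have "card (\<Union>?K) = 2 * card ?K"
    proof (rule card_Union_matching)
      show "matching edges ?K" using m unfolding matching_def by blast
    qed (simp add: complete_edges_iff)
    finally show "2 \<le> 2 * card ?K + card (saturated_outside M i)" by simp
  qed
  with assms(1) show ?thesis by linarith
qed

text \<open>Every cut vertex lies in an even-indexed triangle, whose chosen edge saturates it. So an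
  odd-indexed triangle is covered by its two saturated cut vertices, unless it is the last one,
  which then needs an edge of its own.\<close>
definition chosen_edge :: "nat \<Rightarrow> 'a set" where
  "chosen_edge i = (if even i then SOME g. joint i \<union> joint (Suc i) \<subseteq> g \<and> g \<subseteq> B i \<and> card g = 2
     else B i - joint i)"

definition chosen_edges :: "nat \<Rightarrow> 'a set set" where
  "chosen_edges i = (if even i \<or> Suc i = n then {chosen_edge i} else {})"

lemma chosen_edge:
  assumes "i < n"
  shows "chosen_edge i \<subseteq> B i" "card (chosen_edge i) = 2"
    and "even i \<Longrightarrow> joint i \<union> joint (Suc i) \<subseteq> chosen_edge i"
    and "odd i \<Longrightarrow> chosen_edge i \<inter> joint i = {}"
proof -
  have "card (joint i \<union> joint (Suc i)) \<le> 2"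
    using card_Un_le[of "joint i" "joint (Suc i)"] card_joint_le[of i] card_joint_le[of "Suc i"]
    by linarith
  moreover have "joint i \<union> joint (Suc i) \<subseteq> B i" using joint_subset joint_Suc_subset by blast
  ultimately have "\<exists>g. joint i \<union> joint (Suc i) \<subseteq> g \<and> g \<subseteq> B i \<and> card g = 2"
    using card_block[OF assms] finite_block[OF assms] by (intro exists_subset_between) auto
  from someI_ex[OF this]
  have even: "joint i \<union> joint (Suc i) \<subseteq> chosen_edge i \<and> chosen_edge i \<subseteq> B i \<and>
      card (chosen_edge i) = 2" if "even i"
    using that unfolding chosen_edge_def by simp
  have odd: "card (B i - joint i) = 2" if "odd i"
  proof -
    from that have "0 < i" by (cases i) auto
    with assms show ?thesis
      using card_block card_joint joint_subset finite_joint by (simp add: card_Diff_subset)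
  qed
  show "chosen_edge i \<subseteq> B i" "card (chosen_edge i) = 2"
    using even odd by (auto simp: chosen_edge_def)
  show "joint i \<union> joint (Suc i) \<subseteq> chosen_edge i" if "even i" using even that by blast
  show "chosen_edge i \<inter> joint i = {}" if "odd i" using that by (auto simp: chosen_edge_def)
qed

lemma chosen_edges_subset: "i < n \<Longrightarrow> chosen_edges i \<subseteq> complete_edges (B i)"
  using chosen_edge(1,2) by (auto simp: chosen_edges_def complete_edges_iff)

lemma chosen_edge_saturated:
  assumes "i < n" "even i \<or> Suc i = n"
  shows "chosen_edge i \<subseteq> \<Union>(\<Union>j<n. chosen_edges j)"
proof -
  from assms have "chosen_edge i \<in> (\<Union>j<n. chosen_edges j)" unfolding chosen_edges_def by auto
  then show ?thesis by (rule Union_upper)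
qed

lemma two_le_card_saturated:
  assumes i: "i < n"
  shows "2 \<le> card (B i \<inter> \<Union>(\<Union>j<n. chosen_edges j))"
proof (cases "even i \<or> Suc i = n")
  case True
  then have "chosen_edge i \<subseteq> B i \<inter> \<Union>(\<Union>j<n. chosen_edges j)"
    using chosen_edge_saturated chosen_edge(1) i by auto
  then show ?thesis using chosen_edge(2)[OF i] finite_block[OF i] by (metis card_mono finite_Int)
next
  case False
  then have "odd i" "0 < i" "Suc i < n" using i by (auto intro: Nat.gr0I)
  moreover have "even (i - 1)" "even (Suc i)" using \<open>odd i\<close> \<open>0 < i\<close> by auto
  ultimately have "joint i \<subseteq> chosen_edge (i - 1)" "joint (Suc i) \<subseteq> chosen_edge (Suc i)"
      "chosen_edge (i - 1) \<subseteq> \<Union>(\<Union>j<n. chosen_edges j)"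
      "chosen_edge (Suc i) \<subseteq> \<Union>(\<Union>j<n. chosen_edges j)"
    using chosen_edge(3)[of "i - 1"] chosen_edge(3)[of "Suc i"] chosen_edge_saturated i by auto
  then have "joint i \<union> joint (Suc i) \<subseteq> B i \<inter> \<Union>(\<Union>j<n. chosen_edges j)"
    using joint_subset joint_Suc_subset by blast
  moreover have "card (joint i \<union> joint (Suc i)) = 2"
    using card_Un_disjoint[OF finite_joint finite_joint joints_disjoint]
      card_joint[of i] card_joint[of "Suc i"] \<open>0 < i\<close> \<open>Suc i < n\<close> by simp
  ultimately show ?thesis using finite_block[OF i] by (metis card_mono finite_Int)
qed

lemma maximal_matching_chosen_edges: "maximal_matching edges (\<Union>i<n. chosen_edges i)"
proof (rule maximal_matching_UN)
  show "f \<inter> h = {}" if "i < n" "f \<in> chosen_edges i" "h \<in> chosen_edges i" "f \<noteq> h" for i f h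
    using that by (auto simp: chosen_edges_def split: if_splits)
  show "f \<inter> h = {}" if i: "Suc i < n" and "f \<in> chosen_edges i" "h \<in> chosen_edges (Suc i)" for i f h
  proof -
    from that have "even i" "f = chosen_edge i" "h = chosen_edge (Suc i)"
      by (auto simp: chosen_edges_def split: if_splits)
    with i show ?thesis
      using chosen_edge(1)[of i] chosen_edge(1,4)[of "Suc i"] disjoint_across_joint by simp
  qed
  show "e \<inter> \<Union>(\<Union>j<n. chosen_edges j) \<noteq> {}" if "i < n" "e \<in> complete_edges (B i)" for i e
    using that two_le_card_saturated triangle_cover_iff[OF card_block[OF that(1)]] by blast
qed (fact chosen_edges_subset)

lemma card_chosen_edges:
  assumes "1 \<le> n"
  shows "card (\<Union>i<n. chosen_edges i) = (n + 2) div 2"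
proof -
  have "card (\<Union>i<n. chosen_edges i) = (\<Sum>i<n. card (chosen_edges i))"
    using chosen_edges_subset by (rule card_UN_edge_subsets)
  also have "\<dots> = (\<Sum>i<n. if even i \<or> Suc i = n then 1 else 0)"
    by (intro sum.cong) (auto simp: chosen_edges_def)
  finally show ?thesis using sum_even_or_last_indicator[OF assms] by simp
qed

lemma sat_num_eq: "1 \<le> n \<Longrightarrow> sat_num edges = (n + 2) div 2"
  using sat_num_eqI[OF finite_edges card_maximal_matching_ge maximal_matching_chosen_edges
      card_chosen_edges] .

end

lemma cycle4_cover_bound:
  assumes "distinct [a, b, c, d]" and "F \<subseteq> {{a, b}, {b, c}, {c, d}, {d, a}}" and "finite X"
    and "\<forall>e\<in>{{a, b}, {b, c}, {c, d}, {d, a}}. e \<inter> (X \<union> \<Union>F) \<noteq> {}"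
  shows "2 \<le> card F + card X"
proof -
  have "finite F" using assms(2) finite_subset by blast
  consider "card F = 0" | "card F = 1" | "2 \<le> card F" by linarith
  then show ?thesis
  proof cases
    case 1
    with \<open>finite F\<close> have "F = {}" by simp
    with assms(4) have "{a, b} \<inter> X \<noteq> {}" "{c, d} \<inter> X \<noteq> {}" by auto
    then obtain u v where "u \<in> X" "v \<in> X" "u \<in> {a, b}" "v \<in> {c, d}" by blast
    with assms(1) have "{u, v} \<subseteq> X" "card {u, v} = 2" by auto
    then have "2 \<le> card X" using card_mono[OF assms(3)] by metis
    then show ?thesis by simp
  next
    case 2
    then obtain f where f: "F = {f}" by (rule card_1_singletonE)
    with assms(1,2) obtain g where g: "g \<in> {{a, b}, {b, c}, {c, d}, {d, a}}" "g \<inter> f = {}" by auto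
    from assms(4) g(1) have "g \<inter> (X \<union> \<Union>F) \<noteq> {}" by (rule bspec)
    with f g(2) have "g \<inter> X \<noteq> {}" by auto
    then have "X \<noteq> {}" by blast
    then show ?thesis using assms(3) 2 by (simp add: Suc_leI card_gt_0_iff)
  qed simp
qed

lemma cycle4_edge_avoiding:
  assumes "distinct [a, b, c, d]" "p \<in> {a, b, c, d}" "q \<in> {a, b, c, d}" "q \<noteq> p"
  shows "\<exists>f\<in>{{a, b}, {b, c}, {c, d}, {d, a}}. p \<notin> f \<and> q \<in> f"
  using assms by auto

lemma sum_first_two_rest_one: "1 \<le> n \<Longrightarrow> (\<Sum>i<n. if i = 0 then 2 else 1 :: nat) = n + 1"
  by (induction n rule: dec_induct) auto

locale square_chain = block_chain +
  fixes C :: "nat \<Rightarrow> 'a set set"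
  assumes block_square: "i < n \<Longrightarrow> \<exists>a b c d. distinct [a, b, c, d] \<and> B i = {a, b, c, d} \<and>
      C i = {{a, b}, {b, c}, {c, d}, {d, a}}"
begin

lemma squareE:
  assumes "i < n"
  obtains a b c d where "distinct [a, b, c, d]" "B i = {a, b, c, d}"
    "C i = {{a, b}, {b, c}, {c, d}, {d, a}}"
  using block_square[OF assms] by (elim exE conjE) (rule that; assumption)

sublocale edged_block_chain n B C
  by unfold_locales (use block_square in fastforce)+

lemma card_maximal_matching_ge:
  assumes "1 \<le> n" "maximal_matching edges M"
  shows "n + 1 \<le> card M"
proof -
  have "2 * n \<le> 1 * card M + (n - 1)"
  proof (rule card_maximal_matching_lower[OF assms(2)])
    fix i assume i: "i < n"
    obtain a b c d where sq: "distinct [a, b, c, d]" "C i = {{a, b}, {b, c}, {c, d}, {d, a}}"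
      using squareE[OF i] by metis
    have "2 \<le> card (M \<inter> C i) + card (saturated_outside M i)"
    proof (rule cycle4_cover_bound[OF sq(1)])
      show "M \<inter> C i \<subseteq> {{a, b}, {b, c}, {c, d}, {d, a}}" using sq(2) by blast
      show "finite (saturated_outside M i)"
        using finite_block[OF i] by (simp add: saturated_outside_def)
      show "\<forall>e\<in>{{a, b}, {b, c}, {c, d}, {d, a}}. e \<inter> (saturated_outside M i \<union> \<Union>(M \<inter> C i)) \<noteq> {}"
        using maximal_matching_meets_block_edge[OF assms(2) i] sq(2) by simp
    qed
    then show "2 \<le> 1 * card (M \<inter> C i) + card (saturated_outside M i)" by simp
  qed
  with assms(1) show ?thesis by linarith
qed

lemma edge_avoiding_joint:
  assumes "0 < i" "i < n"
  shows "\<exists>f. f \<in> C i \<and> f \<inter> joint i = {} \<and> joint (Suc i) \<subseteq> f \<and>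
    (\<forall>e\<in>C i. e \<inter> (joint i \<union> f) \<noteq> {})"
proof -
  obtain a b c d where sq: "distinct [a, b, c, d]" "B i = {a, b, c, d}"
      "C i = {{a, b}, {b, c}, {c, d}, {d, a}}"
    using squareE[OF assms(2)] by metis
  obtain p where p: "joint i = {p}" using card_joint[OF assms] by (rule card_1_singletonE)
  have "p \<in> B i" using p joint_subset by blast
  obtain q where q: "q \<in> B i" "q \<noteq> p" "joint (Suc i) \<subseteq> {q}"
  proof (cases "joint (Suc i) = {}")
    case True
    from sq(1,2) obtain q where "q \<in> B i" "q \<noteq> p" by auto
    with True that show ?thesis by blast
  next
    case False
    then have "0 < card (joint (Suc i))" using finite_joint by (simp add: card_gt_0_iff)
    with card_joint_le[of "Suc i"] have "card (joint (Suc i)) = 1" by linarith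
    then obtain q where "joint (Suc i) = {q}" by (rule card_1_singletonE)
    moreover have "q \<noteq> p" using joints_disjoint[of i] p \<open>joint (Suc i) = {q}\<close> by blast
    ultimately show ?thesis using that joint_Suc_subset by blast
  qed
  have "p \<in> {a, b, c, d}" "q \<in> {a, b, c, d}" using \<open>p \<in> B i\<close> q(1) sq(2) by auto
  from cycle4_edge_avoiding[OF sq(1) this q(2)]
  obtain f where "f \<in> {{a, b}, {b, c}, {c, d}, {d, a}}" "p \<notin> f" "q \<in> f" by blast
  with sq(3) have f: "f \<in> C i" "p \<notin> f" "q \<in> f" by simp_all
  have "f \<subseteq> B i" "card f = 2" using f(1) assms(2) edge_subset_block card_edge by auto
  moreover have "finite f" using \<open>card f = 2\<close> by (metis card.infinite zero_neq_numeral)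
  ultimately have "insert p f \<subseteq> B i" "card (insert p f) = 3"
    using f(2) \<open>p \<in> B i\<close> by simp_all
  moreover have "card (B i) = 4" using sq(1,2) by simp
  ultimately have "e \<inter> insert p f \<noteq> {}" if "e \<in> C i" for e
    using that assms(2) finite_block edge_subset_block card_edge
    by (intro subsets_meet_if_card_gt) auto
  then have "\<forall>e\<in>C i. e \<inter> (joint i \<union> f) \<noteq> {}" using p by auto
  moreover have "f \<inter> joint i = {}" "joint (Suc i) \<subseteq> f" using f p q by auto
  ultimately show ?thesis using f(1) by blast
qed

lemma exists_opposite_pair:
  assumes "0 < n"
  shows "\<exists>G. G \<subseteq> C 0 \<and> card G = 2 \<and> \<Union>G = B 0 \<and> (\<forall>f\<in>G. \<forall>g\<in>G. f \<noteq> g \<longrightarrow> f \<inter> g = {})"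
proof -
  obtain a b c d where "distinct [a, b, c, d]" "B 0 = {a, b, c, d}"
      "C 0 = {{a, b}, {b, c}, {c, d}, {d, a}}"
    using assms by (rule squareE)
  then show ?thesis by (intro exI[of _ "{{a, b}, {c, d}}"]) (auto simp: doubleton_eq_iff)
qed

text \<open>The edge chosen in a square contains the next cut vertex, so each later square has its
  left cut vertex saturated and is covered by one edge avoiding that vertex; the first square needs
  two edges.\<close>
definition chosen_edge :: "nat \<Rightarrow> 'a set" where
  "chosen_edge i = (SOME f. f \<in> C i \<and> f \<inter> joint i = {} \<and> joint (Suc i) \<subseteq> f \<and>
     (\<forall>e\<in>C i. e \<inter> (joint i \<union> f) \<noteq> {}))"

definition chosen_edges :: "nat \<Rightarrow> 'a set set" where
  "chosen_edges i = (if i = 0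
     then SOME G. G \<subseteq> C 0 \<and> card G = 2 \<and> \<Union>G = B 0 \<and> (\<forall>f\<in>G. \<forall>g\<in>G. f \<noteq> g \<longrightarrow> f \<inter> g = {})
     else {chosen_edge i})"

lemma chosen_edges_first:
  assumes "0 < n"
  shows "chosen_edges 0 \<subseteq> C 0" "card (chosen_edges 0) = 2" "\<Union>(chosen_edges 0) = B 0"
    "\<forall>f\<in>chosen_edges 0. \<forall>g\<in>chosen_edges 0. f \<noteq> g \<longrightarrow> f \<inter> g = {}"
  using someI_ex[OF exists_opposite_pair[OF assms]] by (simp_all add: chosen_edges_def)

lemma chosen_edges_later: "0 < i \<Longrightarrow> chosen_edges i = {chosen_edge i}"
  by (simp add: chosen_edges_def)

lemma chosen_edge:
  assumes "0 < i" "i < n"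
  shows "chosen_edge i \<in> C i" "chosen_edge i \<inter> joint i = {}" "joint (Suc i) \<subseteq> chosen_edge i"
    "\<forall>e\<in>C i. e \<inter> (joint i \<union> chosen_edge i) \<noteq> {}"
  using someI_ex[OF edge_avoiding_joint[OF assms]] unfolding chosen_edge_def by simp_all

lemma chosen_edges_subset:
  assumes "i < n"
  shows "chosen_edges i \<subseteq> C i"
  using assms chosen_edges_first(1) chosen_edge(1) chosen_edges_later by (cases "i = 0") simp_all

lemma chosen_edges_saturated:
  assumes "i < n" "g \<in> chosen_edges i"
  shows "g \<subseteq> \<Union>(\<Union>j<n. chosen_edges j)"
proof -
  from assms have "g \<in> (\<Union>j<n. chosen_edges j)" by blast
  then show ?thesis by (rule Union_upper)
qed

lemma first_block_saturated:
  assumes "0 < n"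
  shows "B 0 \<subseteq> \<Union>(\<Union>j<n. chosen_edges j)"
proof -
  have "\<Union>(chosen_edges 0) \<subseteq> \<Union>(\<Union>j<n. chosen_edges j)"
    using assms chosen_edges_saturated[of 0] by (intro Union_least) auto
  with chosen_edges_first(3)[OF assms] show ?thesis by simp
qed

lemma joint_saturated:
  assumes "0 < i" "i < n"
  shows "joint i \<subseteq> \<Union>(\<Union>j<n. chosen_edges j)"
proof (cases "i = 1")
  case True
  with assms show ?thesis using first_block_saturated joint_Suc_subset[of 0] by auto
next
  case False
  with assms have "0 < i - 1" "i - 1 < n" by auto
  then have "joint i \<subseteq> chosen_edge (i - 1)" "chosen_edge (i - 1) \<in> chosen_edges (i - 1)"
    using chosen_edge(3)[of "i - 1"] chosen_edges_later[of "i - 1"] assms(1) by simp_all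
  with \<open>i - 1 < n\<close> show ?thesis using chosen_edges_saturated by blast
qed

lemma maximal_matching_chosen_edges: "maximal_matching edges (\<Union>i<n. chosen_edges i)"
proof (rule maximal_matching_UN)
  show "f \<inter> g = {}" if i: "i < n" and "f \<in> chosen_edges i" "g \<in> chosen_edges i" "f \<noteq> g"
    for i f g
  proof (cases "i = 0")
    case True
    with i have "0 < n" by simp
    with that True show ?thesis using chosen_edges_first(4) by blast
  next
    case False
    with that show ?thesis using chosen_edges_later[of i] by simp
  qed
  show "f \<inter> g = {}" if i: "Suc i < n" and "f \<in> chosen_edges i" "g \<in> chosen_edges (Suc i)" for i f g
  proof (rule disjoint_across_joint[OF _ _ _ i])
    show "f \<subseteq> B i" using that chosen_edges_subset[of i] edge_subset_block[of i f] by auto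
    from that have "g = chosen_edge (Suc i)" using chosen_edges_later[of "Suc i"] by simp
    with i show "g \<subseteq> B (Suc i)" "g \<inter> joint (Suc i) = {}"
      using chosen_edge(1,2)[OF zero_less_Suc i] edge_subset_block[OF i] by auto
  qed
  show "e \<inter> \<Union>(\<Union>j<n. chosen_edges j) \<noteq> {}" if i: "i < n" and e: "e \<in> C i" for i e
  proof (cases "i = 0")
    case True
    have "e \<subseteq> B i" "card e = 2" using edge_subset_block[OF i e] card_edge[OF i e] .
    moreover have "B 0 \<subseteq> \<Union>(\<Union>j<n. chosen_edges j)" using first_block_saturated i by simp
    ultimately have "e \<inter> \<Union>(\<Union>j<n. chosen_edges j) = e" "e \<noteq> {}" using True by auto
    then show ?thesis by simp
  next
    case False
    then have "0 < i" by simp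
    with i e have "e \<inter> (joint i \<union> chosen_edge i) \<noteq> {}"
      "joint i \<union> chosen_edge i \<subseteq> \<Union>(\<Union>j<n. chosen_edges j)"
      using chosen_edge(4) joint_saturated chosen_edges_saturated[of i] chosen_edges_later[of i]
      by auto
    then show ?thesis by auto
  qed
qed (fact chosen_edges_subset)

lemma card_chosen_edges:
  assumes "1 \<le> n"
  shows "card (\<Union>i<n. chosen_edges i) = n + 1"
proof -
  have "card (\<Union>i<n. chosen_edges i) = (\<Sum>i<n. card (chosen_edges i))"
    using chosen_edges_subset by (rule card_UN_edge_subsets)
  also have "\<dots> = (\<Sum>i<n. if i = 0 then 2 else 1)"
    using assms chosen_edges_first(2) chosen_edges_later by (intro sum.cong) auto
  finally show ?thesis using sum_first_two_rest_one[OF assms] by simp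
qed

lemma sat_num_eq: "1 \<le> n \<Longrightarrow> sat_num edges = n + 1"
  using sat_num_eqI[OF finite_edges card_maximal_matching_ge maximal_matching_chosen_edges
      card_chosen_edges] .

end

lemma chain_tri_cactusE:
  assumes "chain_tri_cactus V E n"
  obtains B where "triangle_chain n B" "E = (\<Union>i<n. complete_edges (B i))"
proof -
  from assms obtain B where "\<forall>i<n. card (B i) = 3"
    and E: "E = (\<Union>i<n. {{x, y} | x y. x \<in> B i \<and> y \<in> B i \<and> x \<noteq> y})"
    and "\<forall>i. i + 1 < n \<longrightarrow> card (B i \<inter> B (i + 1)) = 1"
    and "\<forall>i j. i < n \<and> j < n \<and> i + 1 < j \<longrightarrow> B i \<inter> B j = {}"
    unfolding chain_tri_cactus_def by blast
  then have "triangle_chain n B" by unfold_locales auto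
  moreover from E have "E = (\<Union>i<n. complete_edges (B i))" unfolding complete_edges_def .
  ultimately show ?thesis by (rule that)
qed

lemma chain_sq_cactusE:
  assumes "chain_sq_cactus V E n"
  obtains B C where "square_chain n B C" "E = (\<Union>i<n. C i)"
proof -
  from assms obtain B C where "\<forall>i<n. \<exists>a b c d. distinct [a, b, c, d] \<and> B i = {a, b, c, d} \<and>
        C i = {{a, b}, {b, c}, {c, d}, {d, a}}"
    and E: "E = (\<Union>i<n. C i)"
    and "\<forall>i. i + 1 < n \<longrightarrow> card (B i \<inter> B (i + 1)) = 1"
    and "\<forall>i j. i < n \<and> j < n \<and> i + 1 < j \<longrightarrow> B i \<inter> B j = {}"
    unfolding chain_sq_cactus_def by blast
  then have "square_chain n B C" by unfold_locales auto
  then show ?thesis using E by (rule that)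
qed

lemma int_half_eq_floor: "int ((n + 2) div 2) = \<lfloor>(real n - 2) / 2\<rfloor> + 2"
proof -
  have "\<lfloor>(real n - 2) / 2\<rfloor> = \<lfloor>real_of_int (int n - 2) / real_of_int 2\<rfloor>" by simp
  also have "\<dots> = (int n - 2) div 2" by (rule floor_divide_of_int_eq)
  finally show ?thesis by (simp add: zdiv_int)
qed

theorem theorem3p3:
  shows "(\<forall>(V :: 'a set) E n. n \<ge> 1 \<and> chain_tri_cactus V E n \<longrightarrow>
            int (sat_num E) = \<lfloor>(real n - 2) / 2\<rfloor> + 2) \<and>
         (\<forall>(V :: 'a set) E n. n \<ge> 1 \<and> chain_sq_cactus V E n \<longrightarrow>
            sat_num E = n + 1)"
proof (intro conjI allI impI)
  fix V :: "'a set" and E n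
  assume "n \<ge> 1 \<and> chain_tri_cactus V E n"
  then obtain B where "1 \<le> n" "triangle_chain n B" "E = (\<Union>i<n. complete_edges (B i))"
    by (auto elim: chain_tri_cactusE)
  then have "sat_num E = (n + 2) div 2" by (simp add: triangle_chain.sat_num_eq)
  then show "int (sat_num E) = \<lfloor>(real n - 2) / 2\<rfloor> + 2" using int_half_eq_floor[of n] by simp
next
  fix V :: "'a set" and E n
  assume "n \<ge> 1 \<and> chain_sq_cactus V E n"
  then obtain B C where "1 \<le> n" "square_chain n B C" "E = (\<Union>i<n. C i)"
    by (auto elim: chain_sq_cactusE)
  then show "sat_num E = n + 1" by (simp add: square_chain.sat_num_eq)
qed

end
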